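(* Let $X\in\mathbb{R}^{m\times n}$ have nonnegative entries and let $A_1,\ldots,A_m,B_1,\ldots,B_n$ be $r\times r$ real symmetric positive definite matrices. Define the linear maps $\mathcal{A}:\mathbb{S}^r\to\mathbb{R}^m$, $Z\mapsto(\operatorname{tr}(A_1Z),\ldots,\operatorname{tr}(A_mZ))$ and $\mathcal{B}:\mathbb{S}^r\to\mathbb{R}^n$, $Z\mapsto(\operatorname{tr}(B_1Z),\ldots,\operatorname{tr}(B_nZ))$. Suppose these matrices are fixed points of the Matrix Multiplicative Update rule, i.e. $$A_i=V_i\,\mathcal{B}^\top(X_{i:})\,V_i,\quad V_i=([\mathcal{B}^\top\mathcal{B}](A_i))^{-1}\#A_i\qquad (i\in[m]),$$ $$B_j=W_j\,\mathcal{A}^\top(X_{:j})\,W_j,\quad W_j=([\mathcal{A}^\top\mathcal{A}](B_j))^{-1}\#B_j\qquad (j\in[n]).$$ Then they satisfy the (reduced) KKT conditions of the problem $\inf\sum_{i,j}(X_{ij}-\operatorname{tr}(A_iB_j))^2$ over $A_i,B_j\in\mathbb{S}^r_+$, namely $$\mathcal{B}^\top(X_{i:})=[\mathcal{B}^\top\mathcal{B}](A_i)\ \ (i\in[m]),\qquad \mathcal{A}^\top(X_{:j})=[\mathcal{A}^\top\mathcal{A}](B_j)\ \ (j\in[n]).$$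
   Context: $\mathbb{S}^r$ denotes the space of $r\times r$ real symmetric matrices and $\mathbb{S}^r_+$ the cone of positive semidefinite ones. $X_{i:}\in\mathbb{R}^n$ is the $i$-th row and $X_{:j}\in\mathbb{R}^m$ the $j$-th column of $X$. Adjoints: $\mathcal{A}^\top(y)=\sum_i y_iA_i$, $\mathcal{B}^\top(z)=\sum_j z_jB_j$; thus $[\mathcal{A}^\top\mathcal{A}](Z)=\sum_i\operatorname{tr}(A_iZ)A_i$ and $[\mathcal{B}^\top\mathcal{B}](Z)=\sum_j\operatorname{tr}(B_jZ)B_j$. For positive definite $C,D$, $C\# D=C^{1/2}(C^{-1/2}DC^{-1/2})^{1/2}C^{1/2}$ is the matrix geometric mean. *)

theory Defs
  imports "HOL-Analysis.Analysis"
begin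

definition sym_mat :: "real^'r^'r \<Rightarrow> bool" where
  "sym_mat C \<longleftrightarrow> transpose C = C"

definition pos_def :: "real^'r^'r \<Rightarrow> bool" where
  "pos_def C \<longleftrightarrow> sym_mat C \<and> (\<forall>x. x \<noteq> 0 \<longrightarrow> x \<bullet> (C *v x) > 0)"

definition pos_semidef :: "real^'r^'r \<Rightarrow> bool" where
  "pos_semidef C \<longleftrightarrow> sym_mat C \<and> (\<forall>x. x \<bullet> (C *v x) \<ge> 0)"

definition msqrt :: "real^'r^'r \<Rightarrow> real^'r^'r" where
  "msqrt C = (THE S. pos_semidef S \<and> S ** S = C)"

definition geo_mean :: "real^'r^'r \<Rightarrow> real^'r^'r \<Rightarrow> real^'r^'r" where
  "geo_mean C D = msqrt C ** msqrt (matrix_inv (msqrt C) ** D ** matrix_inv (msqrt C)) ** msqrt C"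

text \<open>Adjoint of Z \<mapsto> (tr(M_k Z))_k : y \<mapsto> sum_k y_k M_k.\<close>
definition adj_op :: "('k::finite \<Rightarrow> real^'r^'r) \<Rightarrow> ('k \<Rightarrow> real) \<Rightarrow> real^'r^'r" where
  "adj_op M y = (\<Sum>k\<in>UNIV. y k *\<^sub>R M k)"

definition gram_op :: "('k::finite \<Rightarrow> real^'r^'r) \<Rightarrow> real^'r^'r \<Rightarrow> real^'r^'r" where
  "gram_op M Z = (\<Sum>k\<in>UNIV. trace (M k ** Z) *\<^sub>R M k)"

end

theory Submission
  imports Defs
begin

text \<open>For positive definite M and D the geometric mean V = M # D solves the Riccati equation
  V M^-1 V = D: writing G = M^(1/2), one has V = G (G^-1 D G^-1)^(1/2) G and M^-1 = G^-1 G^-1.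
  Take C = [B^T B](A_i), which is positive definite because tr(B_j A_i) > 0, and M = C^-1. The
  fixed-point equation A_i = V B^T(X_i:) V then reads V B^T(X_i:) V = V C V, and cancelling the
  invertible V gives B^T(X_i:) = C; symmetrically for the B_j. Since the matrix square root is a
  definite description, computing with it requires existence and uniqueness of positive
  semidefinite square roots, both obtained from the spectral theorem.\<close>

lemma inner_matrix_vector_transpose: "x \<bullet> (A *v y) = (transpose A *v x) \<bullet> (y::real^'n)"
  by (metis dot_lmul_matrix transpose_transpose vector_transpose_matrix)

lemma sym_mat_inner: "sym_mat A \<Longrightarrow> x \<bullet> (A *v y) = (A *v x) \<bullet> (y::real^'n)"
  by (simp add: inner_matrix_vector_transpose sym_mat_def)

lemma sym_matI:
  fixes A :: "real^'n^'n"
  assumes "\<And>x y. x \<bullet> (A *v y) = (A *v x) \<bullet> y"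
  shows "sym_mat A"
proof -
  have "transpose A *v x = A *v x" for x
  proof -
    have "(transpose A *v x - A *v x) \<bullet> y = 0" for y
      using assms[of x y] by (simp add: inner_matrix_vector_transpose inner_diff_left)
    from this[of "transpose A *v x - A *v x"] show ?thesis by simp
  qed
  then show ?thesis unfolding sym_mat_def by (simp add: matrix_eq)
qed

lemma matrix_inv_right_left:
  fixes A :: "real^'n^'n"
  assumes "invertible A"
  shows matrix_inv_right: "A ** matrix_inv A = mat 1"
    and matrix_inv_left: "matrix_inv A ** A = mat 1"
proof -
  have "\<exists>A'. A ** A' = mat 1 \<and> A' ** A = mat 1" using assms invertible_def by blast
  then have "A ** matrix_inv A = mat 1 \<and> matrix_inv A ** A = mat 1"
    unfolding matrix_inv_def by (rule someI_ex)
  then show "A ** matrix_inv A = mat 1" "matrix_inv A ** A = mat 1" by auto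
qed

lemma invertible_matrix_inv: "invertible (A::real^'n^'n) \<Longrightarrow> invertible (matrix_inv A)"
  using matrix_inv_right_left invertible_def by blast

lemma matrix_inv_unique: "(A::real^'n^'n) ** B = mat 1 \<Longrightarrow> matrix_inv A = B"
proof -
  assume AB: "A ** B = mat 1"
  then have "invertible A" using invertible_right_inverse by blast
  have "matrix_inv A = matrix_inv A ** (A ** B)" using AB by simp
  also have "\<dots> = B" using matrix_inv_left[OF \<open>invertible A\<close>] by (simp add: matrix_mul_assoc)
  finally show ?thesis .
qed

lemma invertible_iff_ker: "invertible (A::real^'n^'n) \<longleftrightarrow> (\<forall>x. A *v x = 0 \<longrightarrow> x = 0)"
  using invertible_left_inverse matrix_left_invertible_ker by blast

lemma invertible_of_square: "(G::real^'n^'n) ** G = M \<Longrightarrow> invertible M \<Longrightarrow> invertible G"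
  unfolding invertible_iff_ker by (metis matrix_vector_mul_assoc matrix_vector_mult_0_right)

lemma sym_mat_matrix_inv: "sym_mat (A::real^'n^'n) \<Longrightarrow> invertible A \<Longrightarrow> sym_mat (matrix_inv A)"
  unfolding sym_mat_def
  by (metis matrix_inv_left matrix_inv_unique matrix_transpose_mul transpose_mat)

lemma matrix_vector_mult_sum_left: "(\<Sum>k\<in>K. M k) *v (x::real^'n) = (\<Sum>k\<in>K. M k *v x)"
  by (induction K rule: infinite_finite_induct) (simp_all add: matrix_vector_mult_add_rdistrib)

lemma matrix_vector_mult_sum_right: "(A::real^'n^'m) *v (\<Sum>u\<in>B. g u) = (\<Sum>u\<in>B. A *v g u)"
  using linear_sum[OF matrix_vector_mul_linear, of A g B] by (simp add: o_def)

lemma nonneg_quadratic_imp_linear_coeff_zero: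
  fixes a q :: real
  assumes nonneg: "\<And>t. 0 \<le> -2*t*a + t^2 * q"
  shows "a = 0"
proof (rule ccontr)
  assume "a \<noteq> 0"
  define s where "s = \<bar>q\<bar> + 1"
  have "s > 0" by (simp add: s_def)
  have "0 \<le> (-2*(a/s)*a + (a/s)^2 * q) * s^2" using nonneg[of "a/s"] by simp
  also have "\<dots> = a * a * (q - 2 * s)"
    using \<open>s > 0\<close> by (simp add: field_simps power2_eq_square)
  finally have "0 \<le> a * a * (q - 2 * s)" .
  moreover have "a * a > 0" using \<open>a \<noteq> 0\<close> not_real_square_gt_zero by metis
  moreover have "q - 2 * s < 0" by (simp add: s_def)
  ultimately show False using mult_pos_neg[of "a * a" "q - 2 * s"] by linarith
qed

lemma pos_semidef_quadratic_form_zero: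
  fixes S :: "real^'n^'n"
  assumes S: "pos_semidef S" and x: "x \<bullet> (S *v x) = 0"
  shows "S *v x = 0"
proof -
  define z where "z = S *v x"
  have sym: "sym_mat S" using S by (simp add: pos_semidef_def)
  have "0 \<le> -2 * t * (z \<bullet> z) + t^2 * (z \<bullet> (S *v z))" for t
  proof -
    have "x \<bullet> (S *v z) = z \<bullet> z" using sym_mat_inner[OF sym, of x z] by (simp add: z_def)
    then have "(x - t *\<^sub>R z) \<bullet> (S *v (x - t *\<^sub>R z)) = -2 * t * (z \<bullet> z) + t^2 * (z \<bullet> (S *v z))"
      using x
      by (simp add: matrix_vector_mult_diff_distrib matrix_vector_mult_scaleR inner_diff_left
          inner_diff_right z_def[symmetric] inner_commute)
        (simp add: algebra_simps power2_eq_square)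
    then show ?thesis using S by (metis pos_semidef_def)
  qed
  then have "z \<bullet> z = 0" by (rule nonneg_quadratic_imp_linear_coeff_zero)
  then show ?thesis by (simp add: z_def)
qed

definition orthonormal_eigenvectors :: "real^'n^'n \<Rightarrow> (real^'n) set \<Rightarrow> bool" where
  "orthonormal_eigenvectors C B \<longleftrightarrow> finite B \<and> pairwise orthogonal B \<and>
     (\<forall>u\<in>B. norm u = 1 \<and> C *v u = (u \<bullet> (C *v u)) *\<^sub>R u)"

lemma rayleigh_quotient_attains_max:
  fixes C :: "real^'n^'n"
  assumes U: "subspace U" "U \<noteq> {0}"
  obtains x where "x \<in> U" "norm x = 1" "\<And>z. z \<in> U \<Longrightarrow> z \<bullet> (C *v z) \<le> (x \<bullet> (C *v x)) * (z \<bullet> z)"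
proof -
  define K where "K = U \<inter> sphere (0::real^'n) 1"
  have normalize: "z /\<^sub>R norm z \<in> K" if "z \<in> U" "z \<noteq> 0" for z
    using that U(1) by (auto simp: K_def subspace_scale)
  obtain y where "y \<in> U" "y \<noteq> 0" using U subspace_0 by blast
  have "compact K" unfolding K_def using closed_subspace[OF U(1)] by (intro closed_Int_compact) auto
  moreover have "K \<noteq> {}" using normalize[OF \<open>y \<in> U\<close> \<open>y \<noteq> 0\<close>] by blast
  moreover have "continuous_on K (\<lambda>x. x \<bullet> (C *v x))"
    by (intro continuous_on_inner continuous_on_id matrix_vector_mult_linear_continuous_on)
  ultimately obtain x where xK: "x \<in> K" and xmax: "\<And>z. z \<in> K \<Longrightarrow> z \<bullet> (C *v z) \<le> x \<bullet> (C *v x)"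
    using continuous_attains_sup by metis
  have "z \<bullet> (C *v z) \<le> (x \<bullet> (C *v x)) * (z \<bullet> z)" if "z \<in> U" for z
  proof (cases "z = 0")
    case False
    from xmax[OF normalize[OF that False]]
    have "(z \<bullet> (C *v z)) / (norm z)^2 \<le> x \<bullet> (C *v x)"
      by (simp add: matrix_vector_mult_scaleR power2_eq_square divide_inverse mult.commute mult.left_commute)
    then show ?thesis using False by (simp add: divide_le_eq dot_square_norm mult.commute)
  qed simp
  with xK that show ?thesis by (auto simp: K_def)
qed

lemma rayleigh_maximizer_eigenvector:
  fixes C :: "real^'n^'n"
  assumes sym: "sym_mat C" and U: "subspace U" and x: "x \<in> U" "x \<bullet> x = 1" "C *v x \<in> U"
    and max: "\<And>z. z \<in> U \<Longrightarrow> z \<bullet> (C *v z) \<le> l * (z \<bullet> z)" and l: "l = x \<bullet> (C *v x)"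
  shows "C *v x = l *\<^sub>R x"
proof -
  have Cx: "z \<bullet> (C *v x) = x \<bullet> (C *v z)" for z using sym_mat_inner[OF sym, of x z] by (simp add: inner_commute)
  have orth: "(l *\<^sub>R x - C *v x) \<bullet> z = 0" if z: "z \<in> U" for z
  proof -
    have "l * (x \<bullet> z) - x \<bullet> (C *v z) = 0"
    proof (rule nonneg_quadratic_imp_linear_coeff_zero)
      fix t :: real
      have "x - t *\<^sub>R z \<in> U" using z x U by (simp add: subspace_diff subspace_scale)
      from max[OF this]
      have "0 \<le> l * ((x - t *\<^sub>R z) \<bullet> (x - t *\<^sub>R z)) - (x - t *\<^sub>R z) \<bullet> (C *v (x - t *\<^sub>R z))"
        by simp
      also have "\<dots> = -2*t*(l * (x \<bullet> z) - x \<bullet> (C *v z)) + t^2*(l * (z \<bullet> z) - z \<bullet> (C *v z))"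
        by (simp add: matrix_vector_mult_diff_distrib matrix_vector_mult_scaleR inner_diff_left
            inner_diff_right x(2) l Cx[of z] inner_commute[of z x])
          (simp add: algebra_simps power2_eq_square)
      finally show "0 \<le> -2*t*(l * (x \<bullet> z) - x \<bullet> (C *v z)) + t^2*(l * (z \<bullet> z) - z \<bullet> (C *v z))" .
    qed
    then show ?thesis by (simp add: inner_diff_left sym_mat_inner[OF sym])
  qed
  have "l *\<^sub>R x - C *v x \<in> U" using x U by (simp add: subspace_diff subspace_scale)
  from orth[OF this] show ?thesis by simp
qed

lemma orthonormal_eigenvectors_insert:
  assumes B: "orthonormal_eigenvectors C B" and x: "norm x = 1" "C *v x = l *\<^sub>R x"
    and orth: "\<And>u. u \<in> B \<Longrightarrow> x \<bullet> u = 0"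
  shows "orthonormal_eigenvectors C (insert x B)"
proof -
  have "pairwise orthogonal (insert x B)"
    using B orth unfolding orthonormal_eigenvectors_def pairwise_insert orthogonal_def
    by (auto simp: inner_commute)
  moreover have "x \<bullet> (C *v x) = l" using x by (simp add: dot_square_norm)
  ultimately show ?thesis using B x by (auto simp: orthonormal_eigenvectors_def)
qed

lemma span_insert_orthogonal_complement:
  fixes x :: "'a::real_inner"
  assumes U: "subspace U" and x: "x \<in> U" "x \<bullet> x = 1"
    and B: "span B = {z \<in> U. x \<bullet> z = 0}"
  shows "span (insert x B) = U"
proof (rule span_subspace)
  show "insert x B \<subseteq> U" using x span_superset[of B] B by auto
  show "U \<subseteq> span (insert x B)"
  proof
    fix z assume "z \<in> U"
    then have "z - (x \<bullet> z) *\<^sub>R x \<in> span B"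
      using x U B by (simp add: subspace_diff subspace_scale inner_diff_right)
    then have "z - (x \<bullet> z) *\<^sub>R x \<in> span (insert x B)" using span_mono[of B "insert x B"] by auto
    moreover have "(x \<bullet> z) *\<^sub>R x \<in> span (insert x B)" by (simp add: span_base span_scale)
    ultimately show "z \<in> span (insert x B)" using span_add by fastforce
  qed
qed (rule U)

lemma sym_mat_orthonormal_eigenbasis_subspace:
  fixes C :: "real^'n^'n"
  assumes sym: "sym_mat C"
  shows "subspace U \<Longrightarrow> (\<forall>x\<in>U. C *v x \<in> U) \<Longrightarrow>
    \<exists>B. B \<subseteq> U \<and> orthonormal_eigenvectors C B \<and> span B = U"
proof (induction "dim U" arbitrary: U rule: less_induct)
  case less
  show ?case
  proof (cases "U = {0}")
    case True
    then show ?thesis by (intro exI[of _ "{}"]) (auto simp: orthonormal_eigenvectors_def)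
  next
    case False
    obtain x where x: "x \<in> U" "norm x = 1"
      and max: "\<And>z. z \<in> U \<Longrightarrow> z \<bullet> (C *v z) \<le> (x \<bullet> (C *v x)) * (z \<bullet> z)"
      using rayleigh_quotient_attains_max[OF less.prems(1) False] by blast
    have xx: "x \<bullet> x = 1" using x(2) by (simp add: dot_square_norm)
    define l where "l = x \<bullet> (C *v x)"
    have eig: "C *v x = l *\<^sub>R x"
      using rayleigh_maximizer_eigenvector[OF sym less.prems(1) x(1) xx _ max] x(1) less.prems(2)
      by (simp add: l_def)
    define U' where "U' = {z \<in> U. x \<bullet> z = 0}"
    have "subspace U'" using less.prems(1) unfolding U'_def subspace_def
      by (auto simp: inner_add_right)
    moreover have "\<forall>z\<in>U'. C *v z \<in> U'"
    proof
      fix z assume "z \<in> U'"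
      then have "z \<in> U" "x \<bullet> z = 0" by (auto simp: U'_def)
      moreover have "x \<bullet> (C *v z) = (C *v x) \<bullet> z" by (rule sym_mat_inner[OF sym])
      ultimately show "C *v z \<in> U'" using less.prems(2) eig by (simp add: U'_def)
    qed
    moreover have "dim U' < dim U"
    proof (rule dim_psubset)
      have "U' \<subseteq> U" "x \<in> U - U'" using x(1) xx by (auto simp: U'_def)
      then show "span U' \<subset> span U"
        using span_eq_iff \<open>subspace U'\<close> less.prems(1) by (metis Diff_iff psubsetI)
    qed
    ultimately obtain B' where B': "B' \<subseteq> U'" "orthonormal_eigenvectors C B'" "span B' = U'"
      using less.hyps by blast
    have "insert x B' \<subseteq> U" "\<And>u. u \<in> B' \<Longrightarrow> x \<bullet> u = 0" using B'(1) x(1) by (auto simp: U'_def)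
    moreover have "span (insert x B') = U"
      using span_insert_orthogonal_complement[OF less.prems(1) x(1) xx] B'(3) by (simp add: U'_def)
    ultimately show ?thesis using orthonormal_eigenvectors_insert[OF B'(2) x(2) eig] by blast
  qed
qed

lemma sym_mat_orthonormal_eigenbasis:
  fixes C :: "real^'n^'n"
  assumes "sym_mat C"
  obtains B where "orthonormal_eigenvectors C B" "span B = UNIV"
  using sym_mat_orthonormal_eigenbasis_subspace[OF assms, of UNIV] by auto

lemma orthonormal_eigenvectors_expand:
  assumes "orthonormal_eigenvectors C B" "span B = UNIV"
  shows "(\<Sum>u\<in>B. (x \<bullet> u) *\<^sub>R u) = x"
  using assms orthonormal_basis_expand[of B x] by (auto simp: orthonormal_eigenvectors_def)

lemma orthonormal_eigenvectors_coeff: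
  assumes B: "orthonormal_eigenvectors C B" and u: "u \<in> B"
  shows "u \<bullet> (\<Sum>w\<in>B. g w *\<^sub>R w) = g u"
proof -
  have "u \<bullet> (\<Sum>w\<in>B. g w *\<^sub>R w) = (\<Sum>w\<in>B. if w = u then g w else 0)"
    unfolding inner_sum_right using B u
    by (intro sum.cong) (auto simp: orthonormal_eigenvectors_def pairwise_def orthogonal_def dot_square_norm)
  also have "\<dots> = g u" using B u by (simp add: orthonormal_eigenvectors_def)
  finally show ?thesis .
qed

lemma pos_semidef_of_spectral_form:
  fixes S :: "real^'n^'n"
  assumes S: "\<And>x y. x \<bullet> (S *v y) = (\<Sum>u\<in>B. c u * (u \<bullet> x) * (u \<bullet> y))"
    and c: "\<And>u. u \<in> B \<Longrightarrow> c u \<ge> 0"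
  shows "pos_semidef S"
proof -
  have "sym_mat S"
    by (rule sym_matI) (simp add: S inner_commute[of "S *v _"] mult.commute mult.left_commute)
  moreover have "x \<bullet> (S *v x) \<ge> 0" for x
    unfolding S by (intro sum_nonneg) (simp add: c mult.assoc)
  ultimately show ?thesis by (simp add: pos_semidef_def)
qed

lemma pos_semidef_sqrt_exists:
  fixes C :: "real^'n^'n"
  assumes psd: "pos_semidef C"
  shows "\<exists>S. pos_semidef S \<and> S ** S = C"
proof -
  obtain B where B: "orthonormal_eigenvectors C B" "span B = UNIV"
    using sym_mat_orthonormal_eigenbasis psd by (metis pos_semidef_def)
  have eig: "C *v u = (u \<bullet> (C *v u)) *\<^sub>R u" if "u \<in> B" for u
    using B(1) that by (simp add: orthonormal_eigenvectors_def)
  have nonneg: "u \<bullet> (C *v u) \<ge> 0" for u using psd by (simp add: pos_semidef_def)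
  define c where "c u = sqrt (u \<bullet> (C *v u))" for u
  define f where "f v = (\<Sum>u\<in>B. (c u * (u \<bullet> v)) *\<^sub>R u)" for v
  have "linear f"
    by (rule linearI) (simp_all add: f_def inner_add_right distrib_left scaleR_add_left sum.distrib
        scaleR_sum_right mult.left_commute)
  define S where "S = matrix f"
  have Sv: "S *v v = f v" for v
    unfolding S_def using \<open>linear f\<close> by (simp add: matrix_works linear_matrix_vector_mul_eq)
  have coeff: "u \<bullet> (S *v v) = c u * (u \<bullet> v)" if "u \<in> B" for u v
    unfolding Sv f_def by (rule orthonormal_eigenvectors_coeff[OF B(1) that])
  have "S ** S = C"
  proof (subst matrix_eq, intro allI)
    fix v
    have "(S ** S) *v v = f (S *v v)" by (simp add: Sv flip: matrix_vector_mul_assoc)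
    also have "\<dots> = (\<Sum>u\<in>B. ((u \<bullet> (C *v u)) * (v \<bullet> u)) *\<^sub>R u)"
      unfolding f_def
      by (rule sum.cong) (auto simp: coeff c_def nonneg inner_commute mult.assoc[symmetric])
    also have "\<dots> = (\<Sum>u\<in>B. (v \<bullet> u) *\<^sub>R (C *v u))"
    proof (rule sum.cong)
      fix u assume "u \<in> B"
      have "(v \<bullet> u) *\<^sub>R (C *v u) = (v \<bullet> u) *\<^sub>R ((u \<bullet> (C *v u)) *\<^sub>R u)"
        using eig[OF \<open>u \<in> B\<close>] by (rule arg_cong)
      then show "((u \<bullet> (C *v u)) * (v \<bullet> u)) *\<^sub>R u = (v \<bullet> u) *\<^sub>R (C *v u)"
        by (simp add: mult.commute)
    qed simp
    also have "\<dots> = C *v (\<Sum>u\<in>B. (v \<bullet> u) *\<^sub>R u)"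
      by (simp add: matrix_vector_mult_sum_right matrix_vector_mult_scaleR)
    also have "\<dots> = C *v v" using orthonormal_eigenvectors_expand[OF B, of v] by simp
    finally show "(S ** S) *v v = C *v v" .
  qed
  moreover have "pos_semidef S"
    by (rule pos_semidef_of_spectral_form[where c = c])
      (simp_all add: Sv f_def inner_sum_right inner_commute mult.commute mult.left_commute c_def nonneg)
  ultimately show ?thesis by blast
qed

text \<open>If S^2 = T^2 and (S - T) u = d u, then 0 = u^T (S (S - T) + (S - T) T) u = d u^T (S + T) u,
  and u^T S u = u^T T u = 0 forces S u = T u = 0.\<close>
lemma pos_semidef_equal_squares_eigenvector:
  fixes S T :: "real^'n^'n"
  assumes S: "pos_semidef S" and T: "pos_semidef T" and eq: "S ** S = T ** T"
    and eig: "(S - T) *v u = d *\<^sub>R u"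
  shows "(S - T) *v u = 0"
proof -
  have sS: "sym_mat S" and sT: "sym_mat T" using S T by (auto simp: pos_semidef_def)
  have "S *v ((S - T) *v u) + (S - T) *v (T *v u) = S *v (S *v u) - T *v (T *v u)"
    by (simp add: matrix_vector_mult_diff_distrib matrix_vector_mult_diff_rdistrib)
  also have "\<dots> = 0" by (simp add: matrix_vector_mul_assoc eq)
  finally have "u \<bullet> (S *v ((S - T) *v u) + (S - T) *v (T *v u)) = 0" by simp
  moreover have "u \<bullet> ((S - T) *v (T *v u)) = ((S - T) *v u) \<bullet> (T *v u)"
    by (simp add: matrix_vector_mult_diff_rdistrib inner_diff_right inner_diff_left
        sym_mat_inner[OF sS, of u "T *v u"] sym_mat_inner[OF sT, of u "T *v u"])
  ultimately have "d * (u \<bullet> (S *v u) + u \<bullet> (T *v u)) = 0"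
    using eig by (simp add: inner_add_right matrix_vector_mult_scaleR algebra_simps)
  moreover have "u \<bullet> (S *v u) \<ge> 0" "u \<bullet> (T *v u) \<ge> 0" using S T by (auto simp: pos_semidef_def)
  ultimately consider "d = 0" | "u \<bullet> (S *v u) = 0" "u \<bullet> (T *v u) = 0"
    by (metis add_nonneg_eq_0_iff mult_eq_0_iff)
  then show ?thesis
  proof cases
    case 1
    then show ?thesis using eig by simp
  next
    case 2
    then have "S *v u = 0" "T *v u = 0"
      using pos_semidef_quadratic_form_zero S T by blast+
    then show ?thesis by (simp add: matrix_vector_mult_diff_rdistrib)
  qed
qed

lemma pos_semidef_sqrt_unique:
  fixes S T :: "real^'n^'n"
  assumes S: "pos_semidef S" and T: "pos_semidef T" and eq: "S ** S = T ** T"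
  shows "S = T"
proof -
  have "sym_mat S" "sym_mat T" using S T by (auto simp: pos_semidef_def)
  then have "sym_mat (S - T)"
    by (intro sym_matI) (simp add: matrix_vector_mult_diff_rdistrib inner_diff_left inner_diff_right
        sym_mat_inner)
  then obtain B where B: "orthonormal_eigenvectors (S - T) B" "span B = UNIV"
    using sym_mat_orthonormal_eigenbasis by blast
  have eigen_zero: "(S - T) *v u = 0" if "u \<in> B" for u
    using B(1) that pos_semidef_equal_squares_eigenvector[OF S T eq, of u "u \<bullet> ((S - T) *v u)"]
    by (simp add: orthonormal_eigenvectors_def)
  have "(S - T) *v v = 0" for v
  proof -
    have "(S - T) *v v = (S - T) *v (\<Sum>u\<in>B. (v \<bullet> u) *\<^sub>R u)"
      using orthonormal_eigenvectors_expand[OF B, of v] by simp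
    also have "\<dots> = 0" by (simp add: matrix_vector_mult_sum_right matrix_vector_mult_scaleR eigen_zero)
    finally show ?thesis .
  qed
  then have "S - T = 0" by (simp add: matrix_eq)
  then show ?thesis by simp
qed

lemma msqrt:
  fixes C :: "real^'n^'n"
  assumes "pos_semidef C"
  shows pos_semidef_msqrt: "pos_semidef (msqrt C)"
    and msqrt_square: "msqrt C ** msqrt C = C"
proof -
  have "\<exists>!S. pos_semidef S \<and> S ** S = C"
    using pos_semidef_sqrt_exists[OF assms] pos_semidef_sqrt_unique by metis
  then have "pos_semidef (msqrt C) \<and> msqrt C ** msqrt C = C"
    unfolding msqrt_def by (rule theI')
  then show "pos_semidef (msqrt C)" "msqrt C ** msqrt C = C" by auto
qed

lemma pos_def_imp_pos_semidef: "pos_def C \<Longrightarrow> pos_semidef C"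
  unfolding pos_def_def pos_semidef_def by (metis inner_zero_left order_less_imp_le order_refl)

lemma pos_def_invertible: "pos_def (C::real^'n^'n) \<Longrightarrow> invertible C"
  unfolding invertible_iff_ker pos_def_def by (metis inner_zero_right less_irrefl)

lemma pos_def_matrix_inv:
  fixes C :: "real^'n^'n"
  assumes C: "pos_def C"
  shows "pos_def (matrix_inv C)"
proof -
  have inv: "invertible C" using pos_def_invertible[OF C] .
  have "x \<bullet> (matrix_inv C *v x) > 0" if "x \<noteq> 0" for x
  proof -
    define y where "y = matrix_inv C *v x"
    have Cy: "C *v y = x" using matrix_inv_right[OF inv] by (simp add: y_def matrix_vector_mul_assoc)
    then have "y \<noteq> 0" using that by auto
    then have "y \<bullet> (C *v y) > 0" using C by (simp add: pos_def_def)
    then show ?thesis using Cy by (simp add: y_def[symmetric] inner_commute)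
  qed
  moreover have "sym_mat (matrix_inv C)" using C inv sym_mat_matrix_inv by (auto simp: pos_def_def)
  ultimately show ?thesis by (simp add: pos_def_def)
qed

lemma matrix_entry_inner_axis: "(M::real^'n^'n) $ i $ j = axis i 1 \<bullet> (M *v axis j 1)"
  by (simp add: matrix_vector_mult_basis inner_axis' column_def)

text \<open>tr(B A) = tr(S A S) with S = B^(1/2) invertible, a sum of the positive numbers
  (S e_k)^T A (S e_k).\<close>
lemma trace_mult_pos_def:
  fixes A B :: "real^'n^'n"
  assumes A: "pos_def A" and B: "pos_def B"
  shows "trace (B ** A) > 0"
proof -
  define S where "S = msqrt B"
  have S: "pos_semidef S" "S ** S = B" using msqrt[OF pos_def_imp_pos_semidef[OF B]] by (auto simp: S_def)
  have sS: "sym_mat S" using S(1) by (simp add: pos_semidef_def)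
  have "trace (B ** A) = trace ((S ** A) ** S)"
    using S(2) trace_mul_sym[of S "S ** A"] by (simp add: matrix_mul_assoc)
  also have "\<dots> = (\<Sum>k\<in>UNIV. (S *v axis k 1) \<bullet> (A *v (S *v axis k 1)))"
    unfolding trace_def matrix_entry_inner_axis
    by (rule sum.cong) (simp_all add: sym_mat_inner[OF sS] flip: matrix_vector_mul_assoc)
  also have "\<dots> > 0"
  proof (rule sum_pos)
    fix k :: 'n
    have "S *v axis k 1 \<noteq> 0"
      using invertible_of_square[OF S(2) pos_def_invertible[OF B]]
      unfolding invertible_iff_ker by (metis axis_eq_0_iff zero_neq_one)
    then show "(S *v axis k 1) \<bullet> (A *v (S *v axis k 1)) > 0" using A by (simp add: pos_def_def)
  qed auto
  finally show ?thesis .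
qed

lemma gram_op_pos_def:
  fixes M :: "'k::finite \<Rightarrow> real^'n^'n"
  assumes M: "\<And>k. pos_def (M k)" and Z: "pos_def Z"
  shows "pos_def (gram_op M Z)"
proof -
  have gram_apply: "gram_op M Z *v x = (\<Sum>k\<in>UNIV. trace (M k ** Z) *\<^sub>R (M k *v x))" for x
    unfolding gram_op_def matrix_vector_mult_sum_left by (simp add: scaleR_matrix_vector_assoc)
  have sM: "sym_mat (M k)" for k using M by (simp add: pos_def_def)
  have "sym_mat (gram_op M Z)"
    by (rule sym_matI) (simp add: gram_apply inner_sum_right inner_sum_left sym_mat_inner[OF sM])
  moreover have "x \<bullet> (gram_op M Z *v x) > 0" if "x \<noteq> 0" for x
    unfolding gram_apply inner_sum_right
  proof (rule sum_pos)
    fix k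
    have "trace (M k ** Z) > 0" using trace_mult_pos_def[OF Z M] .
    moreover have "x \<bullet> (M k *v x) > 0" using M that by (simp add: pos_def_def)
    ultimately show "x \<bullet> (trace (M k ** Z) *\<^sub>R (M k *v x)) > 0" by simp
  qed auto
  ultimately show ?thesis by (simp add: pos_def_def)
qed

lemma invertible_congruence_cancel:
  fixes V P Q :: "real^'n^'n"
  assumes V: "invertible V" and eq: "V ** P ** V = V ** Q ** V"
  shows "P = Q"
proof -
  have cancel: "matrix_inv V ** (V ** R ** V) ** matrix_inv V = R" for R :: "real^'n^'n"
  proof -
    have "matrix_inv V ** (V ** R ** V) ** matrix_inv V = (matrix_inv V ** V) ** R ** (V ** matrix_inv V)"
      by (simp only: matrix_mul_assoc)
    also have "\<dots> = R" by (simp add: matrix_inv_left[OF V] matrix_inv_right[OF V])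
    finally show ?thesis .
  qed
  have "P = matrix_inv V ** (V ** P ** V) ** matrix_inv V" by (rule cancel[symmetric])
  also have "\<dots> = Q" by (simp only: eq cancel)
  finally show ?thesis .
qed

lemma pos_semidef_congruence:
  fixes G D :: "real^'n^'n"
  assumes G: "sym_mat G" and D: "pos_semidef D"
  shows "pos_semidef (G ** D ** G)"
proof -
  have "transpose D = D" "transpose G = G" using D G by (auto simp: pos_semidef_def sym_mat_def)
  then have "sym_mat (G ** D ** G)" by (simp add: sym_mat_def matrix_transpose_mul matrix_mul_assoc)
  moreover have "x \<bullet> ((G ** D ** G) *v x) \<ge> 0" for x
  proof -
    have "x \<bullet> ((G ** D ** G) *v x) = (G *v x) \<bullet> (D *v (G *v x))"
      by (simp add: sym_mat_inner[OF G] flip: matrix_vector_mul_assoc)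
    then show ?thesis using D by (simp add: pos_semidef_def)
  qed
  ultimately show ?thesis by (simp add: pos_semidef_def)
qed

lemma geo_mean_riccati:
  fixes M D :: "real^'n^'n"
  assumes M: "pos_def M" and D: "pos_def D"
  shows "geo_mean M D ** matrix_inv M ** geo_mean M D = D"
    and "invertible (geo_mean M D)"
proof -
  define G where "G = msqrt M"
  have G: "pos_semidef G" "G ** G = M"
    using msqrt[OF pos_def_imp_pos_semidef[OF M]] by (auto simp: G_def)
  have invG: "invertible G" using invertible_of_square[OF G(2) pos_def_invertible[OF M]] .
  define Gi where "Gi = matrix_inv G"
  have cancel: "G ** (Gi ** R) = R" "Gi ** (G ** R) = R" for R :: "real^'n^'n"
    using matrix_inv_right[OF invG] matrix_inv_left[OF invG]
    by (metis Gi_def matrix_mul_assoc matrix_mul_lid)+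
  have GGi: "G ** Gi = mat 1" and GiG: "Gi ** G = mat 1"
    using matrix_inv_right[OF invG] matrix_inv_left[OF invG] by (simp_all add: Gi_def)
  have invM: "matrix_inv M = Gi ** Gi"
    by (rule matrix_inv_unique) (simp add: G(2)[symmetric] cancel GGi flip: matrix_mul_assoc)
  define H where "H = Gi ** D ** Gi"
  have sGi: "sym_mat Gi"
    using G(1) invG sym_mat_matrix_inv by (auto simp: Gi_def pos_semidef_def)
  have "pos_semidef H"
    unfolding H_def using sGi pos_def_imp_pos_semidef[OF D] by (rule pos_semidef_congruence)
  define S where "S = msqrt H"
  have S: "S ** S = H" using msqrt[OF \<open>pos_semidef H\<close>] by (simp add: S_def)
  have V: "geo_mean M D = G ** S ** G"
    by (simp add: geo_mean_def G_def H_def Gi_def S_def)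
  have "G ** S ** G ** (Gi ** Gi) ** (G ** S ** G) = G ** (S ** S) ** G"
    by (simp add: cancel flip: matrix_mul_assoc)
  also have "\<dots> = D" by (simp add: S H_def cancel GiG flip: matrix_mul_assoc)
  finally show "geo_mean M D ** matrix_inv M ** geo_mean M D = D" by (simp add: V invM)
  have "invertible Gi" using invG by (simp add: Gi_def invertible_matrix_inv)
  then have "invertible H"
    unfolding H_def using pos_def_invertible[OF D] by (intro invertible_mult)
  then have "invertible S" using invertible_of_square[OF S] by blast
  with invG show "invertible (geo_mean M D)" unfolding V by (intro invertible_mult)
qed

lemma geo_mean_fixed_point_eq:
  fixes C D P :: "real^'n^'n"
  assumes C: "pos_def C" and D: "pos_def D"
    and fixed: "D = geo_mean (matrix_inv C) D ** P ** geo_mean (matrix_inv C) D"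
  shows "P = C"
proof -
  define V where "V = geo_mean (matrix_inv C) D"
  have inv_inv: "matrix_inv (matrix_inv C) = C"
    using matrix_inv_left[OF pos_def_invertible[OF C]] by (rule matrix_inv_unique)
  have "V ** C ** V = D" and invV: "invertible V"
    using geo_mean_riccati[OF pos_def_matrix_inv[OF C] D] unfolding inv_inv V_def[symmetric] .
  with fixed[folded V_def] have "V ** P ** V = V ** C ** V" by simp
  with invV show ?thesis by (rule invertible_congruence_cancel)
qed

theorem theorem2:
  fixes X :: "real^'n::finite^'m::finite"
    and A :: "'m \<Rightarrow> real^'r::finite^'r"
    and B :: "'n \<Rightarrow> real^'r^'r"
  assumes X_nonneg: "\<And>i j. X $ i $ j \<ge> 0"
    and A_pd: "\<And>i. pos_def (A i)"
    and B_pd: "\<And>j. pos_def (B j)"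
    and A_fix: "\<And>i. A i = geo_mean (matrix_inv (gram_op B (A i))) (A i)
                         ** adj_op B (\<lambda>j. X $ i $ j)
                         ** geo_mean (matrix_inv (gram_op B (A i))) (A i)"
    and B_fix: "\<And>j. B j = geo_mean (matrix_inv (gram_op A (B j))) (B j)
                         ** adj_op A (\<lambda>i. X $ i $ j)
                         ** geo_mean (matrix_inv (gram_op A (B j))) (B j)"
  shows "(\<forall>i. adj_op B (\<lambda>j. X $ i $ j) = gram_op B (A i)) \<and>
         (\<forall>j. adj_op A (\<lambda>i. X $ i $ j) = gram_op A (B j))"
proof -
  have "adj_op B (\<lambda>j. X $ i $ j) = gram_op B (A i)" for i
    by (rule geo_mean_fixed_point_eq[OF gram_op_pos_def[OF B_pd A_pd] A_pd A_fix])
  moreover have "adj_op A (\<lambda>i. X $ i $ j) = gram_op A (B j)" for j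
    by (rule geo_mean_fixed_point_eq[OF gram_op_pos_def[OF A_pd B_pd] B_pd B_fix])
  ultimately show ?thesis by blast
qed

end
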